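(* Let $\mathsf A$ be an MDCS instance and let $\mathsf A'=\mathsf A/E_e$ be obtained by contracting encoder $E_e$, with encoder set $\mathcal E'=\mathcal E\setminus\{E_e\}$. Writing $\mathrm{Proj}'$ for projection onto the coordinates $(H(X_k))_{k\in[[K]]}$ and $(R_i)_{i\in\mathcal E'}$, $$\mathcal R(\mathsf A')=\mathrm{Proj}'\,\mathcal R(\mathsf A),\quad \mathcal R_q(\mathsf A')=\mathrm{Proj}'\,\mathcal R_q(\mathsf A),\quad \mathcal R_{s,q}(\mathsf A')\supseteq\mathrm{Proj}'\,\mathcal R_{s,q}(\mathsf A),\quad \mathcal R_{sp}(\mathsf A')=\mathrm{Proj}'\,\mathcal R_{sp}(\mathsf A).$$
   Context: An MDCS instance $\mathsf{A}=(\mathbf X_{[[K]]},\mathcal E,\mathcal D,\mathbf L,\mathcal G)$ consists of $K$ mutually independent sources $X_1,\dots,X_K$, a finite set $\mathcal E$ of encoders $E_e$ (each has access to all sources and outputs a message $U_e$), a finite set $\mathcal D$ of decoders $D_d$, a level $\mathrm{Lev}(D_d)\in\{1,\dots,K\}$ for each decoder, and an edge set $\mathcal G\subseteq\mathcal E\times\mathcal D$; $\mathrm{Fan}(D_d)=\{E_e:(E_e,D_d)\in\mathcal G\}$, $\mathrm{Fan}(E_e)=\{D_d:(E_e,D_d)\in\mathcal G\}$; $D_d$ must recover $X_1,\dots,X_{\mathrm{Lev}(D_d)}$ from $U_e$, $E_e\in\mathrm{Fan}(D_d)$. Encoder contraction $\mathsf A/E_e$: $\mathcal E'=\mathcal E\setminus\{E_e\}$;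 $\mathcal D'=\mathcal D\setminus\mathrm{Fan}(E_e)$; levels of surviving decoders unchanged; edges restricted to $\mathcal E'\times\mathcal D'$. Rate regions: let $N=K+|\mathcal E|$ with random variables $Y_1,\dots,Y_K,U_e$ ($e\in\mathcal E$); $\mathbf h\in\mathbb R^{2^N-1}$ indexed by nonempty subsets of them; $h_{\mathcal A|\mathcal B}=h_{\mathcal A\cup\mathcal B}-h_{\mathcal B}$. $\mathcal L_1=\{\mathbf h\ge0:h_{Y_1\cdots Y_K}=\sum_kh_{Y_k}\}$, $\mathcal L_2=\{\mathbf h\ge0:h_{U_e|Y_1\cdots Y_K}=0\ \forall e\}$, $\mathcal L_5=\{\mathbf h\ge0:h_{Y_1\cdots Y_{\mathrm{Lev}(D_d)}|(U_e)_{E_e\in\mathrm{Fan}(D_d)}}=0\ \forall d\}$, $\mathcal L_{125}=\mathcal L_1\cap\mathcal L_2\cap\mathcal L_5$, $\mathcal L_4''=\{(\mathbf h,\mathbf R)\in\mathbb R^{2^N-1}_{\ge0}\times\mathbb R^{|\mathcal E|}_{\ge0}:R_e\ge h_{U_e}\ \forall e\}$. All regions live in coordinates $((H(X_k))_k,(R_e)_e)$, where $H(X_k)$ denotes the coordinate $h_{Y_k}$; $\mathrm{Proj}$ is coordinate projection onto these. $\Gamma^*_N$ is the set of entropic vectors, $\overline{\mathrm{con}}$ the closure of the conic hull. $\Gamma_N^q$: conic hull of rank functions $\mathcal A\mapsto\mathrm{rank}(\mathbb A_{:,\mathcal A})$ of matrices $\mathbb A$ over $\mathbb F_q$ with $N$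 columns. $\Gamma^q_{N,\infty}$: conic hull of vectors $\mathcal A\mapsto\dim\sum_{i\in\mathcal A}V_i$ for subspaces $V_1,\dots,V_N$ of a finite-dimensional $\mathbb F_q$-vector space. Then $\mathcal R(\mathsf A)=\mathrm{Proj}(\overline{\mathrm{con}}(\Gamma^*_N\cap\mathcal L_1\cap\mathcal L_2)\cap\mathcal L_5\cap\mathcal L_4'')$ (the rate region: achievable source-entropy/encoder-rate tuples); $\mathcal R_q(\mathsf A)=\mathrm{Proj}(\Gamma^q_{N,\infty}\cap\mathcal L_{125}\cap\mathcal L_4'')$ (achievable by vector $\mathbb F_q$-linear codes); $\mathcal R_{s,q}(\mathsf A)=\mathrm{Proj}(\Gamma^q_N\cap\mathcal L_{125}\cap\mathcal L_4'')$ (achievable by scalar $\mathbb F_q$-linear codes); $\mathcal R_{sp}(\mathsf A)=\mathrm{Proj}_{(R_e),(H(X_k))}\{(R_e,H(X_k),R_e^{X_k})_{e,k}\ge0: R_e=\sum_{i=1}^KR_e^{X_i}\ \forall e;\ \sum_{e:E_e\in\mathrm{Fan}(D_d)}R_e^{X_i}\ge H(X_i)\ \forall d\in\mathcal D,\ i\le\mathrm{Lev}(D_d)\}$ (superposition coding region). *)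

theory Defs
  imports "HOL-Probability.Probability"
begin

record ('e, 'd) mdcs =
  mK   :: nat                  \<comment> \<open>number of sources X_1 .. X_K\<close>
  mE   :: "'e set"
  mD   :: "'d set"
  mLev :: "'d \<Rightarrow> nat"
  mG   :: "('e \<times> 'd) set"

definition mdcs_valid :: "('e, 'd) mdcs \<Rightarrow> bool" where
  "mdcs_valid A \<longleftrightarrow> 1 \<le> mK A \<and> finite (mE A) \<and> finite (mD A)
     \<and> (\<forall>d\<in>mD A. 1 \<le> mLev A d \<and> mLev A d \<le> mK A)
     \<and> mG A \<subseteq> mE A \<times> mD A"

definition fanD :: "('e, 'd) mdcs \<Rightarrow> 'd \<Rightarrow> 'e set" where
  "fanD A d = {e \<in> mE A. (e, d) \<in> mG A}"

definition fanE :: "('e, 'd) mdcs \<Rightarrow> 'e \<Rightarrow> 'd set" where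
  "fanE A e = {d \<in> mD A. (e, d) \<in> mG A}"

definition contract :: "('e, 'd) mdcs \<Rightarrow> 'e \<Rightarrow> ('e, 'd) mdcs" where
  "contract A e =
     A\<lparr> mE := mE A - {e},
        mD := mD A - fanE A e,
        mG := mG A \<inter> ((mE A - {e}) \<times> (mD A - fanE A e)) \<rparr>"

text \<open>The N = K + |E| random variables: Y_k (k = 1..K) and U_e (e in E).\<close>
datatype 'e rv = Y nat | U 'e

definition gset :: "('e, 'd) mdcs \<Rightarrow> 'e rv set" where
  "gset A = Y ` {1..mK A} \<union> U ` mE A"

text \<open>A vector h in R^(2^N - 1) is represented as a function on sets of variables
  which vanishes outside the nonempty subsets of the ground set.\<close>
definition normv :: "'e rv set \<Rightarrow> ('e rv set \<Rightarrow> real) \<Rightarrow> ('e rv set \<Rightarrow> real)" where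
  "normv V g = (\<lambda>S. if S \<noteq> {} \<and> S \<subseteq> V then g S else 0)"

definition Ysrc :: "nat \<Rightarrow> 'e rv set" where
  "Ysrc n = Y ` {1..n}"

definition condh :: "('e rv set \<Rightarrow> real) \<Rightarrow> 'e rv set \<Rightarrow> 'e rv set \<Rightarrow> real" where
  "condh h S T = h (S \<union> T) - h T"

definition conic_hull :: "('a \<Rightarrow> real) set \<Rightarrow> ('a \<Rightarrow> real) set" where
  "conic_hull S = {x. \<exists>T c. finite T \<and> T \<subseteq> S \<and> (\<forall>t\<in>T. 0 \<le> c t)
                        \<and> x = (\<lambda>a. \<Sum>t\<in>T. c t * t a)}"

definition pmf_entropy :: "'a pmf \<Rightarrow> real" where
  "pmf_entropy p = (\<Sum>x\<in>set_pmf p. - pmf p x * log 2 (pmf p x))"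

text \<open>Joint distributions of finitely-valued random variables (values coded in nat);
  the entropy of the subfamily S is the entropy of the marginal on S.\<close>
definition entropic :: "('e, 'd) mdcs \<Rightarrow> ('e rv set \<Rightarrow> real) set" where
  "entropic A = {normv (gset A) (\<lambda>S. pmf_entropy (map_pmf (\<lambda>\<omega>. restrict \<omega> S) p))
                  | p :: ('e rv \<Rightarrow> nat) pmf. finite (set_pmf p)}"

definition f_span :: "(nat \<Rightarrow> 'f::field) set \<Rightarrow> (nat \<Rightarrow> 'f) set" where
  "f_span S = {v. \<exists>T c. finite T \<and> T \<subseteq> S \<and> v = (\<lambda>j. \<Sum>u\<in>T. c u * u j)}"

text \<open>Rank (dimension of the span) of a set of vectors.\<close>
definition f_rank :: "(nat \<Rightarrow> 'f::field) set \<Rightarrow> nat" where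
  "f_rank S = (LEAST n. \<exists>T. T \<subseteq> S \<and> finite T \<and> card T = n \<and> S \<subseteq> f_span T)"

text \<open>Vectors in F^m (with m rows), as functions nat => F vanishing from m on.\<close>
definition fspace :: "nat \<Rightarrow> (nat \<Rightarrow> 'f::field) set" where
  "fspace m = {v. \<forall>j\<ge>m. v j = 0}"

definition f_subspace :: "nat \<Rightarrow> (nat \<Rightarrow> 'f::field) set \<Rightarrow> bool" where
  "f_subspace m W \<longleftrightarrow> W \<subseteq> fspace m \<and> (\<lambda>_. 0) \<in> W
     \<and> (\<forall>v\<in>W. \<forall>w\<in>W. (\<lambda>j. v j + w j) \<in> W) \<and> (\<forall>c. \<forall>v\<in>W. (\<lambda>j. c * v j) \<in> W)"

text \<open>Gamma^q_N: conic hull of rank functions of matrices over F_q whose columns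
  are indexed by the N variables (column i is col i in F^m).\<close>
definition Gamma_scalar :: "'f::{field,finite} itself \<Rightarrow> ('e, 'd) mdcs \<Rightarrow> ('e rv set \<Rightarrow> real) set" where
  "Gamma_scalar _ A = conic_hull
     {normv (gset A) (\<lambda>S. real (f_rank (col ` S)))
      | (col :: 'e rv \<Rightarrow> nat \<Rightarrow> 'f) m. \<forall>i\<in>gset A. col i \<in> fspace m}"

text \<open>Gamma^q_{N,\<infinity>}: conic hull of the vectors S \<mapsto> dim (sum of V_i, i in S)
  for subspaces V_i of F_q^m.\<close>
definition Gamma_vector :: "'f::{field,finite} itself \<Rightarrow> ('e, 'd) mdcs \<Rightarrow> ('e rv set \<Rightarrow> real) set" where
  "Gamma_vector _ A = conic_hull
     {normv (gset A) (\<lambda>S. real (f_rank (f_span (\<Union>i\<in>S. Vs i))))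
      | (Vs :: 'e rv \<Rightarrow> (nat \<Rightarrow> 'f) set) m. \<forall>i\<in>gset A. f_subspace m (Vs i)}"

definition nonneg :: "('a \<Rightarrow> real) \<Rightarrow> bool" where
  "nonneg h \<longleftrightarrow> (\<forall>a. 0 \<le> h a)"

definition L1 :: "('e, 'd) mdcs \<Rightarrow> ('e rv set \<Rightarrow> real) set" where
  "L1 A = {h. nonneg h \<and> h (Ysrc (mK A)) = (\<Sum>k\<in>{1..mK A}. h {Y k})}"

definition L2 :: "('e, 'd) mdcs \<Rightarrow> ('e rv set \<Rightarrow> real) set" where
  "L2 A = {h. nonneg h \<and> (\<forall>e\<in>mE A. condh h {U e} (Ysrc (mK A)) = 0)}"

definition L5 :: "('e, 'd) mdcs \<Rightarrow> ('e rv set \<Rightarrow> real) set" where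
  "L5 A = {h. nonneg h \<and>
     (\<forall>d\<in>mD A. condh h (Ysrc (mLev A d)) (U ` fanD A d) = 0)}"

definition L125 :: "('e, 'd) mdcs \<Rightarrow> ('e rv set \<Rightarrow> real) set" where
  "L125 A = L1 A \<inter> L2 A \<inter> L5 A"

text \<open>Rate vectors R in R^{|E|}_{\<ge>0}, represented as functions vanishing outside E.\<close>
definition L4 :: "('e, 'd) mdcs \<Rightarrow> (('e rv set \<Rightarrow> real) \<times> ('e \<Rightarrow> real)) set" where
  "L4 A = {(h, R). nonneg h \<and> nonneg R \<and> (\<forall>e. e \<notin> mE A \<longrightarrow> R e = 0)
                 \<and> (\<forall>e\<in>mE A. h {U e} \<le> R e)}"

text \<open>Points of rate regions: (H, R) with H k = H(X_k) for k in 1..K (0 otherwise)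
  and R e the rate of encoder e for e in E (0 otherwise).\<close>
definition Proj :: "('e, 'd) mdcs \<Rightarrow> ('e rv set \<Rightarrow> real) \<times> ('e \<Rightarrow> real)
                    \<Rightarrow> (nat \<Rightarrow> real) \<times> ('e \<Rightarrow> real)" where
  "Proj A hR = ((\<lambda>k. if k \<in> {1..mK A} then fst hR {Y k} else 0), snd hR)"

definition region_of :: "('e, 'd) mdcs \<Rightarrow> ('e rv set \<Rightarrow> real) set
                          \<Rightarrow> ((nat \<Rightarrow> real) \<times> ('e \<Rightarrow> real)) set" where
  "region_of A S = Proj A ` {(h, R) \<in> L4 A. h \<in> S}"

definition rate_region :: "('e, 'd) mdcs \<Rightarrow> ((nat \<Rightarrow> real) \<times> ('e \<Rightarrow> real)) set" where
  "rate_region A =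
     region_of A (closure (conic_hull (entropic A \<inter> L1 A \<inter> L2 A)) \<inter> L5 A)"

definition rate_region_q :: "'f::{field,finite} itself \<Rightarrow> ('e, 'd) mdcs
                               \<Rightarrow> ((nat \<Rightarrow> real) \<times> ('e \<Rightarrow> real)) set" where
  "rate_region_q F A = region_of A (Gamma_vector F A \<inter> L125 A)"

definition rate_region_sq :: "'f::{field,finite} itself \<Rightarrow> ('e, 'd) mdcs
                               \<Rightarrow> ((nat \<Rightarrow> real) \<times> ('e \<Rightarrow> real)) set" where
  "rate_region_sq F A = region_of A (Gamma_scalar F A \<inter> L125 A)"

definition rate_region_sp :: "('e, 'd) mdcs \<Rightarrow> ((nat \<Rightarrow> real) \<times> ('e \<Rightarrow> real)) set" where
  "rate_region_sp A = {(H, R). \<exists>Rs :: 'e \<Rightarrow> nat \<Rightarrow> real.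
      (\<forall>k. 0 \<le> H k) \<and> (\<forall>k. k \<notin> {1..mK A} \<longrightarrow> H k = 0)
    \<and> (\<forall>e. 0 \<le> R e) \<and> (\<forall>e. e \<notin> mE A \<longrightarrow> R e = 0)
    \<and> (\<forall>e\<in>mE A. \<forall>k\<in>{1..mK A}. 0 \<le> Rs e k)
    \<and> (\<forall>e\<in>mE A. R e = (\<Sum>i\<in>{1..mK A}. Rs e i))
    \<and> (\<forall>d\<in>mD A. \<forall>i\<in>{1..mLev A d}. (\<Sum>e\<in>fanD A d. Rs e i) \<ge> H i)}"

text \<open>Proj': forget the rate coordinate of encoders outside E'.\<close>
definition proj_enc :: "'e set \<Rightarrow> (nat \<Rightarrow> real) \<times> ('e \<Rightarrow> real) \<Rightarrow> (nat \<Rightarrow> real) \<times> ('e \<Rightarrow> real)" where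
  "proj_enc E' p = (fst p, \<lambda>i. if i \<in> E' then snd p i else 0)"

end

theory Submission
  imports Defs "HOL-Library.Function_Algebras"
begin

(* The proof transports entropy-like vectors h between the
   ground sets of A and of A' = A / E_e by two linear "coordinate substitution" maps:
   - restriction: keep only the coordinates h_S with S avoiding U_e;
   - extension: set h_S := h_{S'} where S' replaces U_e in S by all sources Y_1..Y_K,
     i.e. the removed encoder is re-inserted as an encoder sending all sources.
   Restriction maps the constraint sets L1, L2, L5 of A into those of A' (decoders
   connected to E_e disappear), extension maps those of A' into those of A (a decoder
   connected to E_e sees every source).  Both maps preserve conic hulls and closures,
   hence the entropic, vector-linear and (for restriction only) scalar-linear cones;
   for entropic vectors the extension is realised by letting U_e be an injective code
   of (Y_1, ..., Y_K), for subspace arrangements by V_e := span of the source spaces.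
   Transporting rate points through L4 then gives the two inclusions
   Proj' R(A) \<subseteq> R(A') and R(A') \<subseteq> Proj' R(A); superposition coding is treated
   directly by letting E_e carry every source at full rate. *)

section \<open>Coordinate substitution maps\<close>

definition coord_map :: "('i \<Rightarrow> bool) \<Rightarrow> ('i \<Rightarrow> 'j) \<Rightarrow> ('j \<Rightarrow> real) \<Rightarrow> ('i \<Rightarrow> real)" where
  "coord_map P \<sigma> h = (\<lambda>S. if P S then h (\<sigma> S) else 0)"

lemma conic_hull_mono: "X \<subseteq> Z \<Longrightarrow> conic_hull X \<subseteq> conic_hull Z"
  unfolding conic_hull_def by blast

text \<open>Being linear, a coordinate map sends the conic hull of X into the conic hull of
  the image of X (coefficients of generators with equal images are added up).\<close>
lemma coord_map_conic_hull: "coord_map P \<sigma> ` conic_hull X \<subseteq> conic_hull (coord_map P \<sigma> ` X)"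
proof
  let ?f = "coord_map P \<sigma>"
  fix y assume "y \<in> ?f ` conic_hull X"
  then obtain T c where T: "finite T" "T \<subseteq> X" "\<forall>t\<in>T. 0 \<le> c t"
    and y: "y = ?f (\<lambda>a. \<Sum>t\<in>T. c t * t a)"
    unfolding conic_hull_def by blast
  define c' where "c' s = (\<Sum>t\<in>{t\<in>T. ?f t = s}. c t)" for s
  have "y a = (\<Sum>s\<in>?f ` T. c' s * s a)" for a
  proof -
    have "(\<Sum>s\<in>?f ` T. c' s * s a) = (\<Sum>s\<in>?f ` T. \<Sum>t\<in>{t\<in>T. ?f t = s}. c t * ?f t a)"
      unfolding c'_def by (auto simp: sum_distrib_right intro!: sum.cong)
    also have "\<dots> = (\<Sum>t\<in>T. c t * ?f t a)"
      using sum.image_gen[OF T(1), of "\<lambda>t. c t * ?f t a" ?f] by simp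
    also have "\<dots> = y a" by (simp add: y coord_map_def)
    finally show ?thesis by simp
  qed
  moreover have "\<forall>s\<in>?f ` T. 0 \<le> c' s"
    unfolding c'_def using T(3) by (auto intro: sum_nonneg)
  ultimately show "y \<in> conic_hull (?f ` X)"
    unfolding conic_hull_def using T by (intro CollectI exI[of _ "?f ` T"] exI[of _ c']) auto
qed

lemma continuous_coord_map: "continuous_on UNIV (coord_map P \<sigma>)"
  unfolding coord_map_def
proof (intro continuous_on_coordinatewise_then_product)
  fix i show "continuous_on UNIV (\<lambda>x. if P i then x (\<sigma> i) else (0::real))"
    by (cases "P i") simp_all
qed

lemma coord_map_closure_conic_hull:
  "coord_map P \<sigma> ` closure (conic_hull X) \<subseteq> closure (conic_hull (coord_map P \<sigma> ` X))"
proof -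
  have "coord_map P \<sigma> ` closure (conic_hull X) \<subseteq> closure (coord_map P \<sigma> ` conic_hull X)"
    by (rule image_closure_subset)
       (auto intro: continuous_on_subset[OF continuous_coord_map] closure_subset[THEN subsetD])
  also have "\<dots> \<subseteq> closure (conic_hull (coord_map P \<sigma> ` X))"
    by (intro closure_mono coord_map_conic_hull)
  finally show ?thesis .
qed

lemma conic_hull_vanishing: "\<forall>x\<in>X. x a = 0 \<Longrightarrow> h \<in> conic_hull X \<Longrightarrow> h a = 0"
  unfolding conic_hull_def by (auto intro!: sum.neutral)

lemma closure_conic_hull_vanishing:
  assumes "\<forall>x\<in>X. x a = 0" and "h \<in> closure (conic_hull X)"
  shows "h a = 0"
proof -
  have "closure (conic_hull X) \<subseteq> {h. h a = 0}"
    using conic_hull_vanishing[OF assms(1)]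
    by (intro closure_minimal) (auto intro: closed_Collect_eq)
  thus ?thesis using assms(2) by auto
qed


lemma coord_map_conic_hull_into:
  "coord_map P \<sigma> ` X \<subseteq> Z \<Longrightarrow> h \<in> conic_hull X \<Longrightarrow> coord_map P \<sigma> h \<in> conic_hull Z"
  using coord_map_conic_hull conic_hull_mono by blast

lemma coord_map_closure_conic_hull_into:
  assumes "coord_map P \<sigma> ` X \<subseteq> Z" and "\<forall>x\<in>X. x a = 0"
  shows "\<forall>h\<in>closure (conic_hull X). h a = 0 \<and> coord_map P \<sigma> h \<in> closure (conic_hull Z)"
  using closure_conic_hull_vanishing[OF assms(2)] coord_map_closure_conic_hull[of P \<sigma> X]
    closure_mono[OF conic_hull_mono[OF assms(1)]] by blast

text \<open>Sequences over a field form a module, and f_span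
  is the span in this module, so the library's span calculus applies.\<close>
interpretation fm: module "\<lambda>(c::'f::field) (v::nat \<Rightarrow> 'f). (\<lambda>j. c * v j)"
  by unfold_locales (auto simp: fun_eq_iff algebra_simps)

lemma sum_fun_apply: "(\<Sum>a\<in>T. f a) j = (\<Sum>a\<in>T. f a j)"
  by (induction T rule: infinite_finite_induct) auto

lemma f_span_eq_span: "f_span X = fm.span X"
  unfolding f_span_def fm.span_explicit by (auto simp: sum_fun_apply fun_eq_iff)

lemma f_span_Un_f_span: "f_span (X \<union> f_span B) = f_span (X \<union> B)"
  unfolding f_span_eq_span fm.span_eq
  using fm.span_superset[of B] fm.span_superset[of "X \<union> B"]
    fm.span_superset[of "X \<union> fm.span B"] fm.span_mono[of B "X \<union> B"] by blast

lemma f_subspace_f_span: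
  assumes "X \<subseteq> fspace m"
  shows "f_subspace m (f_span X)"
proof -
  have "fm.subspace (fspace m :: (nat \<Rightarrow> 'f::field) set)"
    by (auto simp: fm.subspace_def fspace_def)
  hence "fm.span X \<subseteq> fspace m" using assms by (rule fm.span_minimal[rotated])
  thus ?thesis unfolding f_subspace_def f_span_eq_span
    using fm.span_zero fm.span_add fm.span_scale by (auto simp: zero_fun_def plus_fun_def)
qed

section \<open>Entropy of functions of a random variable\<close>

lemma pmf_entropy_map_inj:
  "inj_on \<phi> (set_pmf q) \<Longrightarrow> pmf_entropy (map_pmf \<phi> q) = pmf_entropy q"
  unfolding pmf_entropy_def by (simp add: sum.reindex pmf_map_inj)

lemma pmf_entropy_map_determined:
  assumes "\<And>\<omega>. g1 \<omega> = \<phi> (g2 \<omega>)" and "\<And>\<omega>. g2 \<omega> = \<psi> (g1 \<omega>)"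
  shows "pmf_entropy (map_pmf g1 p) = pmf_entropy (map_pmf g2 p)"
proof -
  have "g1 = (\<lambda>\<omega>. \<phi> (g2 \<omega>))" using assms(1) by blast
  hence "map_pmf g1 p = map_pmf \<phi> (map_pmf g2 p)" by (simp add: map_pmf_comp)
  moreover have "inj_on \<phi> (set_pmf (map_pmf g2 p))"
    by (rule inj_onI) (auto, metis assms)
  ultimately show ?thesis by (simp add: pmf_entropy_map_inj)
qed

definition encode_sources :: "nat \<Rightarrow> ('e rv \<Rightarrow> nat) \<Rightarrow> nat" where
  "encode_sources K \<omega> = to_nat (map (\<lambda>k. \<omega> (Y k)) [1..<K+1])"

lemma encode_sources_cong:
  "(\<And>k. k \<in> {1..K} \<Longrightarrow> \<omega> (Y k) = \<omega>' (Y k)) \<Longrightarrow> encode_sources K \<omega> = encode_sources K \<omega>'"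
  unfolding encode_sources_def by (intro arg_cong[where f = to_nat] map_cong) auto

lemma decode_encode_sources:
  assumes "k \<in> {1..K}"
  shows "(from_nat (encode_sources K \<omega>) :: nat list) ! (k - 1) = \<omega> (Y k)"
proof -
  have "k - 1 < K" using assms by auto
  hence "k - 1 < length [1..<K+1]" and "[1..<K+1] ! (k - 1) = k"
    using assms by (simp_all del: upt_Suc)
  thus ?thesis unfolding encode_sources_def by (simp del: upt_Suc)
qed

lemma pmf_entropy_add_code:
  fixes p :: "('e rv \<Rightarrow> nat) pmf" and K :: nat and S :: "'e rv set"
  assumes Ue: "U e \<in> S"
  defines "S' \<equiv> (S - {U e}) \<union> Y ` {1..K}"
  shows "pmf_entropy (map_pmf (\<lambda>\<omega>. restrict (fun_upd \<omega> (U e) (encode_sources K \<omega>)) S) p)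
       = pmf_entropy (map_pmf (\<lambda>\<omega>. restrict \<omega> S') p)"
proof (rule pmf_entropy_map_determined)
  fix \<omega> :: "'e rv \<Rightarrow> nat"
  have "encode_sources K (restrict \<omega> S') = encode_sources K \<omega>"
    by (rule encode_sources_cong) (simp add: S'_def)
  thus "restrict (fun_upd \<omega> (U e) (encode_sources K \<omega>)) S
        = (\<lambda>r. restrict (fun_upd r (U e) (encode_sources K r)) S) (restrict \<omega> S')"
    by (auto simp: S'_def fun_eq_iff)
  show "restrict \<omega> S' = (\<lambda>r. restrict (\<lambda>v. if v \<in> S then r v
            else case v of Y k \<Rightarrow> (from_nat (r (U e)) :: nat list) ! (k - 1) | U _ \<Rightarrow> 0) S')
          (restrict (fun_upd \<omega> (U e) (encode_sources K \<omega>)) S)"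
    using Ue by (auto simp: S'_def fun_eq_iff decode_encode_sources[simplified])
qed

lemma contract_simps [simp]:
  "mK (contract A e) = mK A" "mE (contract A e) = mE A - {e}"
  "mD (contract A e) = mD A - fanE A e" "mLev (contract A e) = mLev A"
  unfolding contract_def by simp_all

lemma gset_contract: "gset (contract A e) = gset A - {U e}"
  unfolding gset_def by auto

lemma fanD_contract: "d \<in> mD A - fanE A e \<Longrightarrow> fanD (contract A e) d = fanD A d"
  unfolding fanD_def contract_def by (auto simp: fanE_def)

lemma fanD_iff_fanE: "e \<in> mE A \<Longrightarrow> d \<in> mD A \<Longrightarrow> e \<in> fanD A d \<longleftrightarrow> d \<in> fanE A e"
  unfolding fanD_def fanE_def by auto

lemma fanD_subset: "fanD A d \<subseteq> mE A"
  unfolding fanD_def by auto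

lemma U_notin_Ysrc [simp]: "U e \<notin> Ysrc l"
  unfolding Ysrc_def by auto

lemma Ysrc_subset_gset: "l \<le> mK A \<Longrightarrow> Ysrc l \<subseteq> gset A - {U e}"
  unfolding Ysrc_def gset_def by auto

definition absorb :: "('e, 'd) mdcs \<Rightarrow> 'e \<Rightarrow> 'e rv set \<Rightarrow> 'e rv set" where
  "absorb A e S = (if U e \<in> S then (S - {U e}) \<union> Ysrc (mK A) else S)"

lemma absorb_id: "U e \<notin> S \<Longrightarrow> absorb A e S = S"
  unfolding absorb_def by simp

section \<open>Restriction and extension maps\<close>

text \<open>Restriction forgets the coordinates involving U_e; extension reads a vector of
  A / E_e as one of A in which U_e carries all the sources.\<close>
definition restrict_vec :: "('e, 'd) mdcs \<Rightarrow> 'e \<Rightarrow> ('e rv set \<Rightarrow> real) \<Rightarrow> ('e rv set \<Rightarrow> real)" where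
  "restrict_vec A e = coord_map (\<lambda>S. S \<noteq> {} \<and> S \<subseteq> gset (contract A e)) id"

definition extend_vec :: "('e, 'd) mdcs \<Rightarrow> 'e \<Rightarrow> ('e rv set \<Rightarrow> real) \<Rightarrow> ('e rv set \<Rightarrow> real)" where
  "extend_vec A e = coord_map (\<lambda>S. S \<noteq> {} \<and> S \<subseteq> gset A) (absorb A e)"

lemma restrict_vec_eq: "S \<subseteq> gset (contract A e) \<Longrightarrow> h {} = 0 \<Longrightarrow> restrict_vec A e h S = h S"
  unfolding restrict_vec_def coord_map_def by auto

lemma extend_vec_eq: "S \<subseteq> gset A \<Longrightarrow> h {} = 0 \<Longrightarrow> extend_vec A e h S = h (absorb A e S)"
  unfolding extend_vec_def coord_map_def absorb_def by auto

lemma restrict_vec_nonneg: "nonneg h \<Longrightarrow> nonneg (restrict_vec A e h)"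
  unfolding nonneg_def restrict_vec_def coord_map_def by auto

lemma extend_vec_nonneg: "nonneg h \<Longrightarrow> nonneg (extend_vec A e h)"
  unfolding nonneg_def extend_vec_def coord_map_def by auto

lemma restrict_vec_normv: "restrict_vec A e (normv (gset A) g) = normv (gset (contract A e)) g"
  unfolding restrict_vec_def coord_map_def normv_def gset_contract by (auto simp: fun_eq_iff)

text \<open>Restriction maps each generating cone of A into the corresponding cone of
  A / E_e: a code for A yields a code for A / E_e by discarding U_e.\<close>
lemma entropic_restrict: "h \<in> entropic A \<Longrightarrow> restrict_vec A e h \<in> entropic (contract A e)"
  unfolding entropic_def by (auto simp: restrict_vec_normv)

lemma restrict_vec_conic_hull_into:
  "restrict_vec A e ` X \<subseteq> Z \<Longrightarrow> h \<in> conic_hull X \<Longrightarrow> restrict_vec A e h \<in> conic_hull Z"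
  unfolding restrict_vec_def by (rule coord_map_conic_hull_into)

lemma Gamma_vector_restrict:
  "h \<in> Gamma_vector F A \<Longrightarrow> restrict_vec A e h \<in> Gamma_vector F (contract A e)"
  unfolding Gamma_vector_def
  by (erule restrict_vec_conic_hull_into[rotated]) (auto simp: restrict_vec_normv gset_contract; blast)

lemma Gamma_scalar_restrict:
  "h \<in> Gamma_scalar F A \<Longrightarrow> restrict_vec A e h \<in> Gamma_scalar F (contract A e)"
  unfolding Gamma_scalar_def
  by (erule restrict_vec_conic_hull_into[rotated]) (auto simp: restrict_vec_normv gset_contract; blast)

lemma Gamma_vector_empty: "h \<in> Gamma_vector F A \<Longrightarrow> h {} = 0"
  unfolding Gamma_vector_def by (erule conic_hull_vanishing[rotated]) (auto simp: normv_def)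

lemma Gamma_scalar_empty: "h \<in> Gamma_scalar F A \<Longrightarrow> h {} = 0"
  unfolding Gamma_scalar_def by (erule conic_hull_vanishing[rotated]) (auto simp: normv_def)

context
  fixes A :: "('e, 'd) mdcs" and e :: 'e
  assumes valid: "mdcs_valid A" and eE: "e \<in> mE A"
begin

lemma finite_encoders: "finite (mE A)"
  using valid unfolding mdcs_valid_def by auto

lemma level_bounds: "d \<in> mD A \<Longrightarrow> 1 \<le> mLev A d \<and> mLev A d \<le> mK A"
  using valid unfolding mdcs_valid_def by auto

text \<open>Absorption maps nonempty subsets of the ground set of A to nonempty subsets of that
  of A / E_e (nonempty because K \<ge> 1).\<close>
lemma absorb_gset:
  assumes "S \<noteq> {}" and "S \<subseteq> gset A"
  shows "absorb A e S \<noteq> {} \<and> absorb A e S \<subseteq> gset (contract A e)"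
proof -
  have "Ysrc (mK A) \<noteq> {}" using valid unfolding mdcs_valid_def Ysrc_def by auto
  thus ?thesis using assms Ysrc_subset_gset[of "mK A" A e]
    unfolding absorb_def gset_contract by auto
qed

lemma extend_vec_normv:
  "extend_vec A e (normv (gset (contract A e)) g) = normv (gset A) (\<lambda>S. g (absorb A e S))"
  unfolding extend_vec_def coord_map_def normv_def using absorb_gset by (auto simp: fun_eq_iff)

section \<open>Transport of the constraint sets\<close>

lemma restrict_vec_L12:
  assumes "h \<in> L1 A \<inter> L2 A" and "h {} = 0"
  shows "restrict_vec A e h \<in> L1 (contract A e) \<inter> L2 (contract A e)"
proof -
  let ?r = "restrict_vec A e h" and ?Y = "Ysrc (mK A)"
  have r: "?r S = h S" if "S \<subseteq> gset (contract A e)" for S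
    using that assms(2) by (rule restrict_vec_eq)
  have Y: "?Y \<subseteq> gset (contract A e)"
    using Ysrc_subset_gset[of "mK A" A e] by (simp add: gset_contract)
  have "?r ?Y = (\<Sum>k\<in>{1..mK A}. ?r {Y k})"
    using assms(1) Y by (simp add: L1_def r gset_def)
  moreover have "condh ?r {U e'} ?Y = 0" if "e' \<in> mE A - {e}" for e'
  proof -
    have "{U e'} \<union> ?Y \<subseteq> gset (contract A e)" using that Y by (auto simp: gset_def)
    thus ?thesis using assms(1) that Y unfolding L2_def condh_def by (simp add: r)
  qed
  ultimately show ?thesis
    using assms(1) restrict_vec_nonneg unfolding L1_def L2_def by auto
qed

lemma restrict_vec_L5:
  assumes "h \<in> L5 A" and "h {} = 0"
  shows "restrict_vec A e h \<in> L5 (contract A e)"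
proof -
  have "condh (restrict_vec A e h) (Ysrc (mLev A d)) (U ` fanD A d) = 0"
    if d: "d \<in> mD A - fanE A e" for d
  proof -
    have "e \<notin> fanD A d" using d fanD_iff_fanE[OF eE] by auto
    hence "U ` fanD A d \<subseteq> gset (contract A e)"
      using fanD_subset[of A d] by (auto simp: gset_def)
    moreover have "Ysrc (mLev A d) \<subseteq> gset (contract A e)"
      using Ysrc_subset_gset[of "mLev A d" A e] level_bounds[of d] d by (auto simp: gset_contract)
    ultimately show ?thesis
      using assms d unfolding L5_def condh_def by (simp add: restrict_vec_eq)
  qed
  thus ?thesis
    using assms(1) by (auto simp: L5_def restrict_vec_nonneg fanD_contract)
qed

lemma extend_vec_L12:
  assumes "h \<in> L1 (contract A e) \<inter> L2 (contract A e)" and "h {} = 0"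
  shows "extend_vec A e h \<in> L1 A \<inter> L2 A"
proof -
  let ?x = "extend_vec A e h" and ?Y = "Ysrc (mK A)"
  have x: "?x S = h (absorb A e S)" if "S \<subseteq> gset A" for S
    using that assms(2) by (rule extend_vec_eq)
  have Y: "?Y \<subseteq> gset A" using Ysrc_subset_gset[of "mK A" A e] by auto
  have xY: "?x ?Y = h ?Y" using x[OF Y] by (simp add: absorb_id)
  have xYk: "?x {Y k} = h {Y k}" if "k \<in> {1..mK A}" for k
    using x[of "{Y k}"] that by (auto simp: absorb_id gset_def)
  have "?x ?Y = (\<Sum>k\<in>{1..mK A}. ?x {Y k})"
    using assms(1) xY xYk by (simp add: L1_def)
  moreover have "condh ?x {U e'} ?Y = 0" if e': "e' \<in> mE A" for e'
  proof -
    have "?x ({U e'} \<union> ?Y) = h (absorb A e ({U e'} \<union> ?Y))"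
      using e' Y by (intro x) (auto simp: gset_def)
    also have "absorb A e ({U e'} \<union> ?Y) = (if e' = e then ?Y else {U e'} \<union> ?Y)"
      unfolding absorb_def by auto
    finally show ?thesis
      using assms(1) e' xY unfolding L2_def condh_def by (auto split: if_splits)
  qed
  ultimately show ?thesis
    using assms(1) extend_vec_nonneg unfolding L1_def L2_def by auto
qed

text \<open>A decoder connected to E_e receives, after extension, all sources through U_e, so
  its decoding constraint holds trivially; other decoders survive in A / E_e.\<close>
lemma extend_vec_L5:
  assumes "h \<in> L5 (contract A e)" and "h {} = 0"
  shows "extend_vec A e h \<in> L5 A"
proof -
  have "condh (extend_vec A e h) (Ysrc (mLev A d)) (U ` fanD A d) = 0" if d: "d \<in> mD A" for d
  proof -
    let ?L = "Ysrc (mLev A d)" and ?F = "U ` fanD A d"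
    have sub: "?L \<union> ?F \<subseteq> gset A" "?F \<subseteq> gset A"
      using Ysrc_subset_gset[of "mLev A d" A e] level_bounds[OF d] fanD_subset[of A d]
      by (auto simp: gset_def)
    show ?thesis
    proof (cases "e \<in> fanD A d")
      case True
      have "?L \<subseteq> Ysrc (mK A)" using level_bounds[OF d] by (auto simp: Ysrc_def)
      hence "absorb A e (?L \<union> ?F) = absorb A e ?F" using True unfolding absorb_def by auto
      thus ?thesis using sub assms(2) unfolding condh_def by (simp add: extend_vec_eq)
    next
      case False
      hence d': "d \<in> mD A - fanE A e" using d fanD_iff_fanE[OF eE] by auto
      have "absorb A e (?L \<union> ?F) = ?L \<union> ?F" "absorb A e ?F = ?F"
        using False unfolding absorb_def by auto
      moreover have "condh h ?L (U ` fanD (contract A e) d) = 0"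
        using assms(1) d' unfolding L5_def by simp
      ultimately show ?thesis using sub assms(2) fanD_contract[OF d']
        unfolding condh_def by (simp add: extend_vec_eq)
    qed
  qed
  thus ?thesis using assms(1) unfolding L5_def by (auto simp: extend_vec_nonneg)
qed


section \<open>Transport of the generating cones\<close>

text \<open>Extension of an entropic vector of A / E_e is entropic for A: let the random
  variable U_e be an injective code of all the sources.\<close>
lemma entropic_extend:
  assumes "h \<in> entropic (contract A e)"
  shows "extend_vec A e h \<in> entropic A"
proof -
  obtain p :: "('e rv \<Rightarrow> nat) pmf" where p: "finite (set_pmf p)"
    and h: "h = normv (gset (contract A e)) (\<lambda>S. pmf_entropy (map_pmf (\<lambda>\<omega>. restrict \<omega> S) p))"
    using assms unfolding entropic_def by auto
  define code where "code \<omega> = fun_upd \<omega> (U e) (encode_sources (mK A) \<omega>)" for \<omega> :: "'e rv \<Rightarrow> nat"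
  have "pmf_entropy (map_pmf (\<lambda>\<omega>. restrict \<omega> (absorb A e S)) p)
      = pmf_entropy (map_pmf (\<lambda>\<omega>. restrict \<omega> S) (map_pmf code p))" for S
  proof (cases "U e \<in> S")
    case True
    thus ?thesis unfolding map_pmf_comp code_def absorb_def Ysrc_def
      by (simp add: pmf_entropy_add_code)
  next
    case False
    hence "(\<lambda>\<omega>. restrict (code \<omega>) S) = (\<lambda>\<omega>. restrict \<omega> S)"
      unfolding code_def by (auto simp: fun_eq_iff)
    thus ?thesis using False unfolding map_pmf_comp by (simp add: absorb_id)
  qed
  hence "extend_vec A e h
      = normv (gset A) (\<lambda>S. pmf_entropy (map_pmf (\<lambda>\<omega>. restrict \<omega> S) (map_pmf code p)))"
    unfolding h extend_vec_normv by presburger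
  moreover have "finite (set_pmf (map_pmf code p))" using p by simp
  ultimately show ?thesis unfolding entropic_def by blast
qed

text \<open>Extension of a subspace arrangement of A / E_e: V_e := span of the source spaces.\<close>
lemma subspace_rank_vector_extend:
  fixes Vs :: "'e rv \<Rightarrow> (nat \<Rightarrow> 'f::field) set"
  assumes Vs: "\<forall>i\<in>gset (contract A e). f_subspace m (Vs i)"
  shows "\<exists>Vs' :: 'e rv \<Rightarrow> (nat \<Rightarrow> 'f) set. (\<forall>i\<in>gset A. f_subspace m (Vs' i)) \<and>
    extend_vec A e (normv (gset (contract A e)) (\<lambda>S. real (f_rank (f_span (\<Union>i\<in>S. Vs i)))))
    = normv (gset A) (\<lambda>S. real (f_rank (f_span (\<Union>i\<in>S. Vs' i))))"
proof -
  define B where "B = (\<Union>i\<in>Ysrc (mK A). Vs i)"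
  define Vs' where "Vs' = Vs(U e := f_span B)"
  have "B \<subseteq> fspace m"
    using Vs Ysrc_subset_gset[of "mK A" A e] unfolding B_def f_subspace_def gset_contract by blast
  hence "\<forall>i\<in>gset A. f_subspace m (Vs' i)"
    using Vs f_subspace_f_span unfolding Vs'_def gset_contract by auto
  moreover have "f_span (\<Union>i\<in>absorb A e S. Vs i) = f_span (\<Union>i\<in>S. Vs' i)" for S
  proof (cases "U e \<in> S")
    case True
    have "(\<Union>i\<in>S. Vs' i) = (\<Union>i\<in>S - {U e}. Vs i) \<union> f_span B"
      and "(\<Union>i\<in>absorb A e S. Vs i) = (\<Union>i\<in>S - {U e}. Vs i) \<union> B"
      using True unfolding Vs'_def absorb_def B_def by auto
    thus ?thesis by (simp add: f_span_Un_f_span)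
  next
    case False
    hence "(\<Union>i\<in>S. Vs' i) = (\<Union>i\<in>S. Vs i)" unfolding Vs'_def by auto
    thus ?thesis using False by (simp add: absorb_id)
  qed
  ultimately show ?thesis by (intro exI[of _ Vs']) (simp add: extend_vec_normv)
qed

lemma Gamma_vector_extend:
  "h \<in> Gamma_vector F (contract A e) \<Longrightarrow> extend_vec A e h \<in> Gamma_vector F A"
  unfolding Gamma_vector_def extend_vec_def
  by (erule coord_map_conic_hull_into[rotated])
     (use subspace_rank_vector_extend[unfolded extend_vec_def] in blast)

section \<open>Transport of rate points\<close>

lemma region_restrict:
  assumes C: "\<forall>h\<in>C. h {} = 0 \<and> restrict_vec A e h \<in> C'"
  shows "proj_enc (mE A - {e}) ` region_of A (C \<inter> L5 A)
         \<subseteq> region_of (contract A e) (C' \<inter> L5 (contract A e))"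
proof
  fix x assume "x \<in> proj_enc (mE A - {e}) ` region_of A (C \<inter> L5 A)"
  then obtain h R where hR: "(h, R) \<in> L4 A" "h \<in> C" "h \<in> L5 A"
    and x: "x = proj_enc (mE A - {e}) (Proj A (h, R))"
    unfolding region_of_def by auto
  let ?h = "restrict_vec A e h"
  define R' where "R' = (\<lambda>i. if i \<in> mE A - {e} then R i else 0)"
  have h0: "h {} = 0" using C hR by auto
  have "?h {U i} = h {U i}" if "i \<in> mE A - {e}" for i
    using that by (intro restrict_vec_eq h0) (auto simp: gset_def)
  hence L4: "(?h, R') \<in> L4 (contract A e)"
    using hR(1) restrict_vec_nonneg[of h A e] unfolding L4_def R'_def nonneg_def by auto
  have "?h {Y k} = h {Y k}" if "k \<in> {1..mK A}" for k
    using that by (intro restrict_vec_eq h0) (auto simp: gset_def)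
  hence "Proj (contract A e) (?h, R') = x"
    unfolding x Proj_def proj_enc_def R'_def by auto
  moreover have "?h \<in> C' \<inter> L5 (contract A e)"
    using C hR restrict_vec_L5[OF hR(3) h0] by auto
  ultimately show "x \<in> region_of (contract A e) (C' \<inter> L5 (contract A e))"
    unfolding region_of_def using L4 by force
qed

text \<open>Conversely, if extension maps C' into C, a rate point of A / E_e lifts to one of A
  by giving the re-inserted encoder the rate h(Y_1 ... Y_K).\<close>
lemma region_extend:
  assumes C': "\<forall>h\<in>C'. h {} = 0 \<and> extend_vec A e h \<in> C"
  shows "region_of (contract A e) (C' \<inter> L5 (contract A e))
         \<subseteq> proj_enc (mE A - {e}) ` region_of A (C \<inter> L5 A)"
proof
  fix x assume "x \<in> region_of (contract A e) (C' \<inter> L5 (contract A e))"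
  then obtain h R where hR: "(h, R) \<in> L4 (contract A e)" "h \<in> C'" "h \<in> L5 (contract A e)"
    and x: "x = Proj (contract A e) (h, R)"
    unfolding region_of_def by auto
  let ?h = "extend_vec A e h"
  define R' where "R' = R(e := h (Ysrc (mK A)))"
  have h0: "h {} = 0" using C' hR by auto
  have hn: "nonneg h" using hR unfolding L4_def by auto
  have x_eq: "?h S = h (absorb A e S)" if "S \<subseteq> gset A" for S
    using that h0 by (rule extend_vec_eq)
  have "?h {U i} = h {U i}" if "i \<in> mE A - {e}" for i
    using that by (subst x_eq) (auto simp: gset_def absorb_def)
  moreover have "?h {U e} = h (Ysrc (mK A))"
    using eE by (subst x_eq) (auto simp: gset_def absorb_def)
  ultimately have L4: "(?h, R') \<in> L4 A"
    using hR(1) hn eE extend_vec_nonneg[OF hn, of A e] unfolding L4_def R'_def nonneg_def by auto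
  have "?h {Y k} = h {Y k}" if "k \<in> {1..mK A}" for k
    using that by (subst x_eq) (auto simp: gset_def absorb_def)
  moreover have "R i = 0" if "i \<notin> mE A - {e}" for i
    using hR(1) that unfolding L4_def by auto
  ultimately have "proj_enc (mE A - {e}) (Proj A (?h, R')) = x"
    unfolding x Proj_def proj_enc_def R'_def by (auto intro!: ext)
  moreover have "?h \<in> C \<inter> L5 A"
    using C' hR extend_vec_L5[OF hR(3) h0] by auto
  ultimately show "x \<in> proj_enc (mE A - {e}) ` region_of A (C \<inter> L5 A)"
    unfolding region_of_def using L4 by force
qed

lemma rate_region_contract:
  "rate_region (contract A e) = proj_enc (mE A - {e}) ` rate_region A"
proof -
  let ?X = "entropic A \<inter> L1 A \<inter> L2 A"
  let ?X' = "entropic (contract A e) \<inter> L1 (contract A e) \<inter> L2 (contract A e)"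
  have X0: "\<forall>x\<in>?X. x {} = 0" and X0': "\<forall>x\<in>?X'. x {} = 0"
    by (auto simp: entropic_def normv_def)
  have "restrict_vec A e ` ?X \<subseteq> ?X'"
  proof (intro image_subsetI)
    fix h assume "h \<in> ?X"
    thus "restrict_vec A e h \<in> ?X'"
      using entropic_restrict[of h A e] restrict_vec_L12[of h] X0 by blast
  qed
  from coord_map_closure_conic_hull_into[OF this[unfolded restrict_vec_def] X0]
  have res: "\<forall>h\<in>closure (conic_hull ?X). h {} = 0 \<and> restrict_vec A e h \<in> closure (conic_hull ?X')"
    unfolding restrict_vec_def by blast
  have "extend_vec A e ` ?X' \<subseteq> ?X"
  proof (intro image_subsetI)
    fix h assume "h \<in> ?X'"
    thus "extend_vec A e h \<in> ?X"
      using entropic_extend[of h] extend_vec_L12[of h] X0' by blast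
  qed
  from coord_map_closure_conic_hull_into[OF this[unfolded extend_vec_def] X0']
  have ext: "\<forall>h\<in>closure (conic_hull ?X'). h {} = 0 \<and> extend_vec A e h \<in> closure (conic_hull ?X)"
    unfolding extend_vec_def by blast
  show ?thesis
    unfolding rate_region_def using region_restrict[OF res] region_extend[OF ext] by blast
qed

lemma rate_region_q_contract:
  "rate_region_q F (contract A e) = proj_enc (mE A - {e}) ` rate_region_q F A"
proof -
  have res: "\<forall>h\<in>Gamma_vector F A \<inter> L1 A \<inter> L2 A. h {} = 0 \<and>
          restrict_vec A e h \<in> Gamma_vector F (contract A e) \<inter> L1 (contract A e) \<inter> L2 (contract A e)"
    using Gamma_vector_restrict[of _ F A e] restrict_vec_L12 Gamma_vector_empty[of _ F A] by blast
  have ext: "\<forall>h\<in>Gamma_vector F (contract A e) \<inter> L1 (contract A e) \<inter> L2 (contract A e).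
          h {} = 0 \<and> extend_vec A e h \<in> Gamma_vector F A \<inter> L1 A \<inter> L2 A"
    using Gamma_vector_extend[of _ F] extend_vec_L12 Gamma_vector_empty[of _ F "contract A e"] by blast
  show ?thesis
    unfolding rate_region_q_def L125_def Int_assoc[symmetric]
    using region_restrict[OF res] region_extend[OF ext] by blast
qed

text \<open>Only one inclusion for scalar codes: re-inserting E_e would need a single column
  carrying all K sources.\<close>
lemma rate_region_sq_contract:
  "proj_enc (mE A - {e}) ` rate_region_sq F A \<subseteq> rate_region_sq F (contract A e)"
proof -
  have "\<forall>h\<in>Gamma_scalar F A \<inter> L1 A \<inter> L2 A. h {} = 0 \<and>
          restrict_vec A e h \<in> Gamma_scalar F (contract A e) \<inter> L1 (contract A e) \<inter> L2 (contract A e)"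
    using Gamma_scalar_restrict[of _ F A e] restrict_vec_L12 Gamma_scalar_empty[of _ F A] by blast
  thus ?thesis
    unfolding rate_region_sq_def L125_def Int_assoc[symmetric] by (rule region_restrict)
qed

text \<open>Superposition coding: dropping E_e keeps every surviving decoder's constraint
  (its fan is unchanged).\<close>
lemma rate_region_sp_project:
  "proj_enc (mE A - {e}) ` rate_region_sp A \<subseteq> rate_region_sp (contract A e)"
proof
  fix x assume "x \<in> proj_enc (mE A - {e}) ` rate_region_sp A"
  then obtain H R Rs where x: "x = proj_enc (mE A - {e}) (H, R)"
    and c: "\<forall>k. 0 \<le> H k" "\<forall>k. k \<notin> {1..mK A} \<longrightarrow> H k = 0"
      "\<forall>e. 0 \<le> R e" "\<forall>e\<in>mE A. \<forall>k\<in>{1..mK A}. 0 \<le> Rs e k"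
      "\<forall>e\<in>mE A. R e = (\<Sum>i\<in>{1..mK A}. Rs e i)"
      "\<forall>d\<in>mD A. \<forall>i\<in>{1..mLev A d}. (\<Sum>e\<in>fanD A d. Rs e i) \<ge> H i"
    unfolding rate_region_sp_def by blast
  have x_eq: "x = (H, \<lambda>i. if i \<in> mE A - {e} then R i else 0)"
    unfolding x proj_enc_def by (simp add: fun_eq_iff)
  have "(\<Sum>e\<in>fanD (contract A e) d. Rs e i) \<ge> H i"
    if "d \<in> mD A - fanE A e" and "i \<in> {1..mLev A d}" for d i
    using c(6) that by (simp add: fanD_contract)
  thus "x \<in> rate_region_sp (contract A e)"
    unfolding x_eq rate_region_sp_def
  proof (intro CollectI case_prodI exI[of _ Rs] conjI)
    show "\<forall>e'. 0 \<le> (if e' \<in> mE A - {e} then R e' else 0)" using c(3) by simp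
  qed (use c(1,2,4,5) in auto)
qed

text \<open>Re-inserting E_e with the rate H(X_1) + ... + H(X_K), carrying every source at its
  full entropy, satisfies all decoders connected to it.\<close>
lemma rate_region_sp_lift:
  "rate_region_sp (contract A e) \<subseteq> proj_enc (mE A - {e}) ` rate_region_sp A"
proof
  fix x assume "x \<in> rate_region_sp (contract A e)"
  then obtain H R Rs where x: "x = (H, R)"
    and c: "\<forall>k. 0 \<le> H k" "\<forall>k. k \<notin> {1..mK A} \<longrightarrow> H k = 0"
      "\<forall>e. 0 \<le> R e" "\<forall>e'. e' \<notin> mE A - {e} \<longrightarrow> R e' = 0"
      "\<forall>e'\<in>mE A - {e}. \<forall>k\<in>{1..mK A}. 0 \<le> Rs e' k"
      "\<forall>e'\<in>mE A - {e}. R e' = (\<Sum>i\<in>{1..mK A}. Rs e' i)"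
      "\<forall>d\<in>mD A - fanE A e. \<forall>i\<in>{1..mLev A d}. (\<Sum>e\<in>fanD (contract A e) d. Rs e i) \<ge> H i"
    unfolding rate_region_sp_def by auto
  define Rs' where "Rs' = Rs(e := H)"
  define R' where "R' = R(e := (\<Sum>i\<in>{1..mK A}. H i))"
  have Rs'_nonneg: "\<forall>e'\<in>mE A. \<forall>k\<in>{1..mK A}. 0 \<le> Rs' e' k"
    using c(1,5) unfolding Rs'_def by auto
  have decode: "(\<Sum>e'\<in>fanD A d. Rs' e' i) \<ge> H i" if d: "d \<in> mD A" and i: "i \<in> {1..mLev A d}" for d i
  proof (cases "e \<in> fanD A d")
    case True
    have "H i = Rs' e i" unfolding Rs'_def by simp
    also have "\<dots> \<le> (\<Sum>e'\<in>fanD A d. Rs' e' i)"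
      using True Rs'_nonneg i level_bounds[OF d] fanD_subset[of A d]
        finite_subset[OF fanD_subset finite_encoders]
      by (intro member_le_sum) auto
    finally show ?thesis .
  next
    case False
    hence d': "d \<in> mD A - fanE A e" using d fanD_iff_fanE[OF eE] by auto
    have "(\<Sum>e'\<in>fanD A d. Rs' e' i) = (\<Sum>e'\<in>fanD A d. Rs e' i)"
      using False unfolding Rs'_def by (intro sum.cong) auto
    thus ?thesis using c(7) d' i by (simp add: fanD_contract)
  qed
  have "(H, R') \<in> rate_region_sp A"
    unfolding rate_region_sp_def
  proof (intro CollectI case_prodI exI[of _ Rs'] conjI)
    show "\<forall>e'. 0 \<le> R' e'" using c(1,3) unfolding R'_def by (simp add: sum_nonneg)
    show "\<forall>e'. e' \<notin> mE A \<longrightarrow> R' e' = 0" using c(4) eE unfolding R'_def by auto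
    show "\<forall>e'\<in>mE A. R' e' = (\<Sum>i\<in>{1..mK A}. Rs' e' i)" using c(6) unfolding R'_def Rs'_def by auto
  qed (use c(1,2) Rs'_nonneg decode in auto)
  moreover have "proj_enc (mE A - {e}) (H, R') = x"
    unfolding x proj_enc_def R'_def using c(4) by (auto simp: fun_eq_iff)
  ultimately show "x \<in> proj_enc (mE A - {e}) ` rate_region_sp A" by force
qed

end

theorem theorem5:
  fixes A :: "('e, 'd) mdcs" and e :: 'e and F :: "'f::{field,finite} itself"
  assumes "mdcs_valid A" and "e \<in> mE A"
  shows "rate_region (contract A e) = proj_enc (mE A - {e}) ` rate_region A
       \<and> rate_region_q F (contract A e) = proj_enc (mE A - {e}) ` rate_region_q F A
       \<and> rate_region_sq F (contract A e) \<supseteq> proj_enc (mE A - {e}) ` rate_region_sq F A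
       \<and> rate_region_sp (contract A e) = proj_enc (mE A - {e}) ` rate_region_sp A"
  using rate_region_contract[OF assms] rate_region_q_contract[OF assms]
    rate_region_sq_contract[OF assms]
    rate_region_sp_project[OF assms] rate_region_sp_lift[OF assms]
  by blast

end
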